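(* \[ B^{\mathrm{pk}}(x,y)=\sqrt{\frac{\sqrt{1-y}\cosh(x\sqrt{1-y})+\sinh(x\sqrt{1-y})}{\sqrt{1-y}\cosh(x\sqrt{1-y})-\sinh(x\sqrt{1-y})}}. \]
   Context: For a permutation $\pi=\pi_1\cdots\pi_n$, $\operatorname{des}(\pi)$ is the number of $1\le i\le n-1$ with $\pi_i>\pi_{i+1}$, $\operatorname{asc}(\pi)$ the number with $\pi_i<\pi_{i+1}$, and $\operatorname{pk}(\pi)$ the number of $2\le i\le n-1$ with $\pi_{i-1}<\pi_i>\pi_{i+1}$. A ballot permutation is one with $\operatorname{asc}(\pi_1\cdots\pi_i)\ge\operatorname{des}(\pi_1\cdots\pi_i)$ for all $i$; $\mathscr B_n$ is the set of ballot permutations of $[n]$, $\mathscr B_0=\{\epsilon\}$ with $\operatorname{pk}(\epsilon)=0$. $B^{\mathrm{pk}}(x,y)=\sum_{n\ge0}\sum_{\pi\in\mathscr B_n}y^{\operatorname{pk}(\pi)}\frac{x^n}{n!}$. *)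

theory Defs
  imports "HOL-Analysis.Analysis" "HOL-Combinatorics.Multiset_Permutations"
begin

text \<open>Permutations are lists; position i (1-based in the paper) is index i-1 here.\<close>

definition des :: "nat list \<Rightarrow> nat" where
  "des p = card {i. i + 1 < length p \<and> p ! i > p ! (i + 1)}"

definition asc :: "nat list \<Rightarrow> nat" where
  "asc p = card {i. i + 1 < length p \<and> p ! i < p ! (i + 1)}"

definition pk :: "nat list \<Rightarrow> nat" where
  "pk p = card {i. 0 < i \<and> i + 1 < length p \<and> p ! (i - 1) < p ! i \<and> p ! i > p ! (i + 1)}"

definition ballot :: "nat list \<Rightarrow> bool" where
  "ballot p \<longleftrightarrow> (\<forall>i \<le> length p. asc (take i p) \<ge> des (take i p))"

definition ballot_perms :: "nat \<Rightarrow> nat list set" where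
  "ballot_perms n = {p \<in> permutations_of_set {1..n}. ballot p}"

end

theory Submission
  imports Defs
begin

text \<open>
  Let \<open>P\<^sub>n(y)\<close> and \<open>B\<^sub>n(y)\<close> be the peak polynomials of all permutations and of the ballot
  permutations of \<open>[n]\<close>, with exponential generating functions \<open>P\<close> and \<open>B\<close>.
  The largest entry splits a permutation into two blocks and is a peak exactly when neither
  block is empty; this gives the Riccati equation \<open>P' = y P\<^sup>2 + (1 - y) (2 P - 1)\<close>.
  Cutting a nonempty permutation into a reversed prefix and a suffix that are both ballot
  is possible at exactly two places, namely where the ascent-minus-descent walk reaches its
  minimum for the first time and just after it leaves it for the last time; such cuts neither
  create nor destroy peaks, so \<open>B\<^sup>2 = 2 P - 1\<close>.  The closed form \<open>Q\<close> satisfies the same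
  Riccati equation and \<open>Q(0) = 1\<close>, hence \<open>P = Q\<close> near \<open>0\<close> and \<open>B = sqrt (2 Q - 1)\<close>.
\<close>

section \<open>Order-isomorphic relabelling\<close>

lemma des_map_strict_mono:
  assumes "strict_mono_on (set p) f"
  shows "des (map f p) = des p"
  unfolding des_def using strict_mono_on_less[OF assms]
  by (auto simp: nth_mem intro!: arg_cong[where f = card])

lemma asc_map_strict_mono:
  assumes "strict_mono_on (set p) f"
  shows "asc (map f p) = asc p"
  unfolding asc_def using strict_mono_on_less[OF assms]
  by (auto simp: nth_mem intro!: arg_cong[where f = card])

lemma pk_map_strict_mono:
  assumes "strict_mono_on (set p) f"
  shows "pk (map f p) = pk p"
  unfolding pk_def using strict_mono_on_less[OF assms]
  by (auto simp: nth_mem intro!: arg_cong[where f = card])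

lemma ballot_map_strict_mono:
  assumes "strict_mono_on (set p) f"
  shows "ballot (map f p) = ballot p"
proof -
  have "strict_mono_on (set (take i p)) f" for i
    using assms set_take_subset[of i p] unfolding strict_mono_on_def by blast
  then show ?thesis
    unfolding ballot_def by (simp add: take_map asc_map_strict_mono des_map_strict_mono)
qed

lemma sum_permutations_of_set_relabel:
  fixes A :: "nat set" and F :: "nat list \<Rightarrow> 'a::comm_monoid_add"
  assumes "finite A" and F_inv: "\<And>f p. strict_mono_on (set p) f \<Longrightarrow> F (map f p) = F p"
  shows "(\<Sum>p\<in>permutations_of_set A. F p) = (\<Sum>p\<in>permutations_of_set {..<card A}. F p)"
proof -
  define xs where "xs = sorted_list_of_set A"
  define g where "g = (!) xs"
  have len: "length xs = card A"
    unfolding xs_def by simp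
  have g_mono: "strict_mono_on {..<card A} g"
    unfolding g_def xs_def strict_mono_on_def
    by (auto intro: sorted_wrt_nth_less[OF strict_sorted_list_of_set])
  have g_inj: "inj_on g {..<card A}"
    using g_mono by (rule strict_mono_on_imp_inj_on)
  have "g ` {..<length xs} = set xs"
    unfolding g_def by (auto simp: in_set_conv_nth)
  then have g_image: "g ` {..<card A} = A"
    using assms(1) by (simp add: len xs_def)
  have "permutations_of_set A = map g ` permutations_of_set {..<card A}"
    using permutations_of_set_image_inj[OF g_inj] g_image by simp
  moreover have "inj_on (map g) (permutations_of_set {..<card A})"
    using g_inj by (intro inj_on_mapI) (auto dest: permutations_of_setD)
  ultimately have "(\<Sum>p\<in>permutations_of_set A. F p)
      = (\<Sum>p\<in>permutations_of_set {..<card A}. F (map g p))"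
    by (simp add: sum.reindex)
  also have "\<dots> = (\<Sum>p\<in>permutations_of_set {..<card A}. F p)"
    using g_mono by (intro sum.cong refl F_inv) (auto dest: permutations_of_setD)
  finally show ?thesis .
qed

section \<open>Peaks\<close>

lemma pk_Nil [simp]: "pk [] = 0"
  by (simp add: pk_def)

lemma pk_Cons:
  "pk (a # zs) = of_bool (2 \<le> length zs \<and> a < zs ! 0 \<and> zs ! 1 < zs ! 0) + pk zs"
proof -
  let ?c = "2 \<le> length zs \<and> a < zs ! 0 \<and> zs ! 1 < zs ! 0"
  let ?Z = "{i. 0 < i \<and> i + 1 < length zs \<and> zs ! (i - 1) < zs ! i \<and> zs ! i > zs ! (i + 1)}"
  have peaks: "{i. 0 < i \<and> i + 1 < length (a # zs) \<and> (a # zs) ! (i - 1) < (a # zs) ! i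
                   \<and> (a # zs) ! i > (a # zs) ! (i + 1)} = (if ?c then {1} else {}) \<union> Suc ` ?Z"
    (is "?L = ?R")
  proof (rule set_eqI)
    fix i show "i \<in> ?L \<longleftrightarrow> i \<in> ?R"
      by (cases i; cases "i - 1") (auto simp: numeral_2_eq_2 image_iff)
  qed
  have "finite ?Z"
    by (rule finite_subset[of _ "{..<length zs}"]) auto
  moreover have "1 \<notin> Suc ` ?Z"
    by auto
  ultimately show ?thesis
    unfolding pk_def peaks by (simp add: card_image card_insert_if)
qed

lemma pk_append:
  assumes "xs \<noteq> []" "ys \<noteq> []"
  shows "pk (xs @ ys) = pk xs + pk ys
     + of_bool (2 \<le> length xs \<and> xs ! (length xs - 2) < last xs \<and> hd ys < last xs)
     + of_bool (2 \<le> length ys \<and> last xs < hd ys \<and> ys ! 1 < hd ys)"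
  using assms(1)
proof (induction xs rule: list_nonempty_induct)
  case (single x)
  then show ?case
    using assms(2) by (simp add: pk_Cons hd_conv_nth)
next
  case (cons x xs)
  show ?case
  proof (cases "length xs = 1")
    case True
    then obtain z where "xs = [z]"
      by (cases xs) auto
    then show ?thesis
      using assms(2) by (simp add: pk_Cons hd_conv_nth nth_append Suc_le_eq)
  next
    case False
    with cons.hyps have len: "2 \<le> length xs"
      by (cases xs) (auto simp: Suc_le_eq)
    have "(xs @ ys) ! 0 = xs ! 0" "(xs @ ys) ! 1 = xs ! 1"
      using len by (auto simp: nth_append)
    then have "pk ((x # xs) @ ys) = of_bool (x < xs ! 0 \<and> xs ! 1 < xs ! 0) + pk (xs @ ys)"
      using len by (simp only: append_Cons pk_Cons) simp
    moreover have "pk (x # xs) = of_bool (x < xs ! 0 \<and> xs ! 1 < xs ! 0) + pk xs"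
      using len by (simp add: pk_Cons)
    moreover have "length (x # xs) - 2 = Suc (length xs - 2)"
      using len by simp
    ultimately show ?thesis
      using cons len by simp
  qed
qed

lemma pk_snoc:
  "pk (xs @ [a]) = pk xs + of_bool (2 \<le> length xs \<and> xs ! (length xs - 2) < last xs \<and> a < last xs)"
  by (cases "xs = []") (simp_all add: pk_append pk_Cons)

lemma pk_rev [simp]: "pk (rev xs) = pk xs"
proof (induction xs)
  case (Cons a xs)
  show ?case
  proof (cases "length xs < 2")
    case True
    then have "xs = [] \<or> (\<exists>b. xs = [b])"
      by (cases xs) auto
    then show ?thesis
      by (auto simp: pk_Cons)
  next
    case False
    then have "xs \<noteq> []"
      by auto
    with False have "rev xs ! (length xs - 2) = xs ! 1" "last (rev xs) = xs ! 0"
      by (simp_all add: rev_nth last_rev hd_conv_nth)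
    moreover have "pk (rev (a # xs)) = pk (rev xs)
        + of_bool (rev xs ! (length xs - 2) < last (rev xs) \<and> a < last (rev xs))"
      using False by (simp add: pk_snoc)
    ultimately show ?thesis
      using Cons False by (simp add: pk_Cons conj_commute)
  qed
qed simp

lemma pk_append_Cons_max:
  assumes "\<forall>x\<in>set s \<union> set t. x < m"
  shows "pk (s @ m # t) = pk s + pk t + of_bool (s \<noteq> [] \<and> t \<noteq> [])"
proof -
  have pk_mt: "pk (m # t) = pk t"
    using assms by (cases t) (auto simp: pk_Cons)
  show ?thesis
  proof (cases "s = []")
    case False
    then have "last s < m"
      using assms last_in_set[OF False] by blast
    then have "pk (s @ m # t) = pk s + pk (m # t) + of_bool (t \<noteq> [])"
      using pk_append[OF False, of "m # t"] assms by (cases t) auto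
    with False show ?thesis
      using pk_mt by simp
  qed (simp add: pk_mt)
qed

lemma pk_le_length: "pk p \<le> length p"
proof -
  have "pk p \<le> card {..<length p}"
    unfolding pk_def by (rule card_mono) auto
  then show ?thesis
    by simp
qed

section \<open>The ballot walk\<close>

definition walk :: "nat list \<Rightarrow> nat \<Rightarrow> int" where
  "walk p t = (\<Sum>k<t. sgn (int (p ! Suc k) - int (p ! k)))"

lemma walk_0 [simp]: "walk p 0 = 0"
  by (simp add: walk_def)

lemma walk_Suc: "walk p (Suc t) = walk p t + sgn (int (p ! Suc t) - int (p ! t))"
  by (simp add: walk_def)

lemma walk_Suc_distinct:
  assumes "distinct p" "Suc k < length p"
  shows "\<bar>walk p (Suc k) - walk p k\<bar> = 1"
proof -
  have "p ! Suc k \<noteq> p ! k"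
    using assms by (simp add: nth_eq_iff_index_eq)
  then show ?thesis
    by (simp add: walk_Suc sgn_if)
qed

lemma sgn_diff_of_nat:
  "sgn (int b - int a) = of_bool (a < b) - of_bool (b < a)"
  by (simp add: sgn_if)

lemma asc_minus_des_take:
  assumes "l \<le> length p"
  shows "int (asc (take l p)) - int (des (take l p)) = walk p (l - 1)"
proof -
  have "asc (take l p) = card ({..<l - 1} \<inter> {k. p ! k < p ! Suc k})"
    unfolding asc_def using assms by (intro arg_cong[where f = card]) auto
  moreover have "des (take l p) = card ({..<l - 1} \<inter> {k. p ! Suc k < p ! k})"
    unfolding des_def using assms by (intro arg_cong[where f = card]) auto
  ultimately show ?thesis
    unfolding walk_def sgn_diff_of_nat sum_subtractf by simp
qed

lemma ballot_iff_walk_nonneg: "ballot p \<longleftrightarrow> (\<forall>t<length p. 0 \<le> walk p t)"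
proof -
  have "ballot p \<longleftrightarrow> (\<forall>l\<le>length p. 0 \<le> walk p (l - 1))"
    unfolding ballot_def using asc_minus_des_take by (metis diff_ge_0_iff_ge of_nat_le_iff)
  also have "\<dots> \<longleftrightarrow> (\<forall>t<length p. 0 \<le> walk p t)"
  proof (intro iffI allI impI)
    fix t assume "\<forall>l\<le>length p. 0 \<le> walk p (l - 1)" "t < length p"
    then show "0 \<le> walk p t"
      by (metis Suc_leI diff_Suc_1)
  next
    fix l assume "\<forall>t<length p. 0 \<le> walk p t" "l \<le> length p"
    then show "0 \<le> walk p (l - 1)"
      by (cases l) auto
  qed
  finally show ?thesis .
qed

lemma walk_drop:
  "j + t < length p \<Longrightarrow> walk (drop j p) t = walk p (j + t) - walk p j"
  by (induction t) (simp_all add: walk_Suc)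

lemma walk_rev_take:
  "t < j \<Longrightarrow> j \<le> length p \<Longrightarrow> walk (rev (take j p)) t = walk p (j - 1 - t) - walk p (j - 1)"
proof (induction t)
  case (Suc t)
  have "j - 1 - t = Suc (j - 1 - Suc t)"
    using Suc.prems by simp
  then have "walk p (j - 1 - t)
      = walk p (j - 1 - Suc t) + sgn (int (p ! (j - 1 - t)) - int (p ! (j - 1 - Suc t)))"
    by (simp add: walk_Suc)
  moreover have "rev (take j p) ! t = p ! (j - 1 - t)"
    and "rev (take j p) ! Suc t = p ! (j - 1 - Suc t)"
    using Suc.prems by (simp_all add: rev_nth)
  ultimately show ?case
    using Suc by (simp add: walk_Suc sgn_if)
qed simp

lemma ballot_drop_iff:
  assumes "j \<le> length p"
  shows "ballot (drop j p) \<longleftrightarrow> (\<forall>t. j \<le> t \<and> t < length p \<longrightarrow> walk p j \<le> walk p t)"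
proof -
  have "ballot (drop j p) \<longleftrightarrow> (\<forall>u. j + u < length p \<longrightarrow> walk p j \<le> walk p (j + u))"
    unfolding ballot_iff_walk_nonneg by (auto simp: walk_drop)
  also have "\<dots> \<longleftrightarrow> (\<forall>t. j \<le> t \<and> t < length p \<longrightarrow> walk p j \<le> walk p t)"
    by (metis le_add1 le_add_diff_inverse)
  finally show ?thesis .
qed

lemma ballot_rev_take_iff:
  assumes "j \<le> length p"
  shows "ballot (rev (take j p)) \<longleftrightarrow> (\<forall>t<j. walk p (j - 1) \<le> walk p t)"
proof -
  have "ballot (rev (take j p)) \<longleftrightarrow> (\<forall>u<j. walk p (j - 1) \<le> walk p (j - 1 - u))"
    unfolding ballot_iff_walk_nonneg using assms by (simp add: walk_rev_take)
  also have "\<dots> \<longleftrightarrow> (\<forall>t<j. walk p (j - 1) \<le> walk p t)"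
  proof (intro iffI allI impI)
    fix t assume all: "\<forall>u<j. walk p (j - 1) \<le> walk p (j - 1 - u)" and "t < j"
    then have "j - 1 - t < j" "j - 1 - (j - 1 - t) = t"
      by auto
    then show "walk p (j - 1) \<le> walk p t"
      using all by metis
  qed auto
  finally show ?thesis .
qed

section \<open>Cutting a walk at its minima\<close>

definition min_cuts :: "(nat \<Rightarrow> int) \<Rightarrow> nat \<Rightarrow> nat set" where
  "min_cuts h n = {j. j \<le> n \<and> (\<forall>t<j. h (j - 1) \<le> h t) \<and> (\<forall>t. j \<le> t \<and> t < n \<longrightarrow> h j \<le> h t)}"

lemma min_cut_cases:
  assumes steps: "\<And>k. Suc k < n \<Longrightarrow> \<bar>h (Suc k) - h k\<bar> = 1"
    and min: "\<And>t. t < n \<Longrightarrow> m \<le> h t" and "t\<^sub>0 < n" "h t\<^sub>0 = m"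
    and "j \<in> min_cuts h n"
  shows "(j < n \<and> h j = m \<and> (\<forall>t<j. m < h t))
       \<or> (0 < j \<and> j \<le> n \<and> h (j - 1) = m \<and> (\<forall>t. j \<le> t \<and> t < n \<longrightarrow> m < h t))"
proof -
  from \<open>j \<in> min_cuts h n\<close> have "j \<le> n" and left: "\<And>t. t < j \<Longrightarrow> h (j - 1) \<le> h t"
    and right: "\<And>t. j \<le> t \<Longrightarrow> t < n \<Longrightarrow> h j \<le> h t"
    by (auto simp: min_cuts_def)
  consider "j = 0" | "j = n" | "0 < j" "j < n"
    using \<open>j \<le> n\<close> by linarith
  then show ?thesis
  proof cases
    case 1
    then show ?thesis
      using right[of t\<^sub>0] min[of 0] assms(3,4) by auto
  next
    case 2
    then show ?thesis
      using left[of t\<^sub>0] min[of "n - 1"] assms(3,4) by auto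
  next
    case inner: 3
    have "\<bar>h j - h (j - 1)\<bar> = 1"
      using steps[of "j - 1"] inner by simp
    then consider "h j = h (j - 1) + 1" | "h j = h (j - 1) - 1"
      by linarith
    then show ?thesis
    proof cases
      case up: 1
      then have "h (j - 1) \<le> h t" if "t < n" for t
        using left[of t] right[of t] that by (cases "t < j") auto
      then have "h (j - 1) = m"
        using min[of "j - 1"] assms(3,4) inner by fastforce
      then show ?thesis
        using up inner right by fastforce
    next
      case down: 2
      then have "h j \<le> h t" if "t < n" for t
        using left[of t] right[of t] that by (cases "t < j") auto
      then have "h j = m"
        using min[of j] assms(3,4) inner by fastforce
      then show ?thesis
        using down inner left by fastforce
    qed
  qed
qed

lemma min_cutI:
  assumes steps: "\<And>k. Suc k < n \<Longrightarrow> \<bar>h (Suc k) - h k\<bar> = 1"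
    and min: "\<And>t. t < n \<Longrightarrow> m \<le> h t"
    and "(j < n \<and> h j = m \<and> (\<forall>t<j. m < h t))
       \<or> (0 < j \<and> j \<le> n \<and> h (j - 1) = m \<and> (\<forall>t. j \<le> t \<and> t < n \<longrightarrow> m < h t))"
  shows "j \<in> min_cuts h n"
  using assms(3)
proof
  assume first: "j < n \<and> h j = m \<and> (\<forall>t<j. m < h t)"
  have "h (j - 1) \<le> h t" if "t < j" for t
  proof -
    have "\<bar>h j - h (j - 1)\<bar> = 1" "m < h (j - 1)"
      using steps[of "j - 1"] first that by auto
    then show ?thesis
      using first that by fastforce
  qed
  then show ?thesis
    using first min by (auto simp: min_cuts_def)
next
  assume after_last: "0 < j \<and> j \<le> n \<and> h (j - 1) = m \<and> (\<forall>t. j \<le> t \<and> t < n \<longrightarrow> m < h t)"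
  have "h j \<le> h t" if "j \<le> t" "t < n" for t
  proof -
    have "\<bar>h j - h (j - 1)\<bar> = 1" "m < h j"
      using steps[of "j - 1"] after_last that by auto
    then show ?thesis
      using after_last that by fastforce
  qed
  then show ?thesis
    using after_last min by (auto simp: min_cuts_def)
qed

lemma card_min_cuts:
  assumes "0 < n" and steps: "\<And>k. Suc k < n \<Longrightarrow> \<bar>h (Suc k) - h k\<bar> = 1"
  shows "card (min_cuts h n) = 2"
proof -
  define m where "m = Min (h ` {..<n})"
  define Z where "Z = {t. t < n \<and> h t = m}"
  have min: "m \<le> h t" if "t < n" for t
    unfolding m_def using that by simp
  have "m \<in> h ` {..<n}"
    unfolding m_def using assms(1) by (intro Min_in) auto
  then obtain t\<^sub>0 where t\<^sub>0: "t\<^sub>0 < n" "h t\<^sub>0 = m"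
    by auto
  have Z: "finite Z" "Z \<noteq> {}"
    unfolding Z_def using t\<^sub>0 by auto
  have first: "(j < n \<and> h j = m \<and> (\<forall>t<j. m < h t)) \<longleftrightarrow> Min Z = j" for j
  proof -
    have "(j < n \<and> h j = m \<and> (\<forall>t<j. m < h t)) \<longleftrightarrow> j \<in> Z \<and> (\<forall>t<j. t \<notin> Z)"
      using min unfolding Z_def by (auto simp: less_le)
    also have "\<dots> \<longleftrightarrow> Min Z = j"
      using Z by (auto simp: Min_eq_iff intro: leI)
    finally show ?thesis .
  qed
  have after_last: "(0 < j \<and> j \<le> n \<and> h (j - 1) = m \<and> (\<forall>t. j \<le> t \<and> t < n \<longrightarrow> m < h t))
      \<longleftrightarrow> Suc (Max Z) = j" for j
  proof -
    have "(0 < j \<and> j \<le> n \<and> h (j - 1) = m \<and> (\<forall>t. j \<le> t \<and> t < n \<longrightarrow> m < h t))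
        \<longleftrightarrow> 0 < j \<and> j - 1 \<in> Z \<and> (\<forall>t. j \<le> t \<longrightarrow> t \<notin> Z)"
    proof (cases j)
      case (Suc i)
      then show ?thesis
        using min unfolding Z_def by (auto simp: less_le)
    qed (simp add: Z_def)
    also have "\<dots> \<longleftrightarrow> Suc (Max Z) = j"
      using Z by (cases j) (auto simp: Max_eq_iff intro: leI)
    finally show ?thesis .
  qed
  have "min_cuts h n = {Min Z, Suc (Max Z)}"
  proof (rule set_eqI)
    fix j
    note cut_iff = min_cut_cases[of n h m, OF steps min t\<^sub>0] min_cutI[of n h m, OF steps min]
    show "j \<in> min_cuts h n \<longleftrightarrow> j \<in> {Min Z, Suc (Max Z)}"
      using cut_iff[of j] unfolding first after_last by blast
  qed
  moreover have "Min Z \<le> Max Z"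
    using Z by (simp add: Min_le Max_in)
  ultimately show ?thesis
    by simp
qed

lemma ballot_cut_iff_min_cut:
  assumes "j \<le> length p"
  shows "ballot (rev (take j p)) \<and> ballot (drop j p) \<longleftrightarrow> j \<in> min_cuts (walk p) (length p)"
  using assms by (auto simp: min_cuts_def ballot_rev_take_iff ballot_drop_iff)

lemma pk_take_drop_min_cut:
  assumes "j \<in> min_cuts (walk p) (length p)"
  shows "pk (take j p) + pk (drop j p) = pk p"
proof (cases "0 < j \<and> j < length p")
  case False
  with assms have "j = 0 \<or> j = length p"
    by (auto simp: min_cuts_def)
  then show ?thesis
    by auto
next
  case True
  from assms have left: "\<And>t. t < j \<Longrightarrow> walk p (j - 1) \<le> walk p t"
    and right: "\<And>t. j \<le> t \<Longrightarrow> t < length p \<Longrightarrow> walk p j \<le> walk p t"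
    by (auto simp: min_cuts_def)
  have no_final_ascent: "\<not> (2 \<le> j \<and> p ! (j - 2) < p ! (j - 1))"
  proof
    assume asc: "2 \<le> j \<and> p ! (j - 2) < p ! (j - 1)"
    then have "walk p (j - 1) = walk p (j - 2) + 1"
      using walk_Suc[of p "j - 2"] by (simp add: Suc_diff_Suc numeral_2_eq_2)
    then show False
      using left[of "j - 2"] asc by simp
  qed
  have no_initial_descent: "\<not> (Suc j < length p \<and> p ! Suc j < p ! j)"
  proof
    assume des: "Suc j < length p \<and> p ! Suc j < p ! j"
    then have "walk p (Suc j) = walk p j - 1"
      by (simp add: walk_Suc)
    then show False
      using right[of "Suc j"] des by simp
  qed
  have ne: "take j p \<noteq> []" "drop j p \<noteq> []"
    using True by auto
  have "last (take j p) = p ! (j - 1)"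
    using True ne(1) by (simp add: last_conv_nth)
  have "pk p = pk (take j p @ drop j p)"
    by simp
  also have "\<dots> = pk (take j p) + pk (drop j p)"
    using pk_append[OF ne] no_final_ascent no_initial_descent True \<open>last (take j p) = p ! (j - 1)\<close>
    by (auto simp: hd_drop_conv_nth)
  finally show ?thesis
    by simp
qed

lemma sum_ballot_cuts:
  fixes y :: "'a::comm_semiring_1"
  assumes "distinct p" "p \<noteq> []"
  shows "(\<Sum>j\<le>length p. of_bool (ballot (rev (take j p))) * y ^ pk (take j p)
            * (of_bool (ballot (drop j p)) * y ^ pk (drop j p))) = 2 * y ^ pk p"
proof -
  let ?C = "min_cuts (walk p) (length p)"
  have "(\<Sum>j\<le>length p. of_bool (ballot (rev (take j p))) * y ^ pk (take j p)
            * (of_bool (ballot (drop j p)) * y ^ pk (drop j p)))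
      = (\<Sum>j\<le>length p. of_bool (j \<in> ?C) * y ^ pk p)"
  proof (rule sum.cong[OF refl])
    fix j assume "j \<in> {..length p}"
    then have "ballot (rev (take j p)) \<and> ballot (drop j p) \<longleftrightarrow> j \<in> ?C"
      by (intro ballot_cut_iff_min_cut) simp
    then show "of_bool (ballot (rev (take j p))) * y ^ pk (take j p)
            * (of_bool (ballot (drop j p)) * y ^ pk (drop j p)) = of_bool (j \<in> ?C) * y ^ pk p"
      using pk_take_drop_min_cut[of j p] by (auto simp: power_add[symmetric])
  qed
  also have "\<dots> = of_nat (card ?C) * y ^ pk p"
  proof -
    have "{..length p} \<inter> {j. j \<in> ?C} = ?C"
      by (auto simp: min_cuts_def)
    then show ?thesis
      by simp
  qed
  also have "card ?C = 2"
    using assms by (intro card_min_cuts walk_Suc_distinct) auto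
  finally show ?thesis
    by simp
qed

section \<open>Decomposing permutations\<close>

definition perm_pairs :: "'a set \<Rightarrow> ('a list \<times> 'a list) set" where
  "perm_pairs A = {(s, t). s @ t \<in> permutations_of_set A}"

lemma sum_perm_pairs_eq_sum_Pow:
  assumes "finite A"
  shows "(\<Sum>(s, t)\<in>perm_pairs A. f s t)
       = (\<Sum>X\<in>Pow A. \<Sum>s\<in>permutations_of_set X. \<Sum>t\<in>permutations_of_set (A - X). f s t)"
proof -
  have "(\<Sum>(s, t)\<in>perm_pairs A. f s t)
      = (\<Sum>(X, s, t)\<in>Sigma (Pow A) (\<lambda>X. permutations_of_set X \<times> permutations_of_set (A - X)). f s t)"
  proof (rule sum.reindex_bij_witness[where i = "\<lambda>(X, s, t). (s, t)"
        and j = "\<lambda>(s, t). (set s, s, t)"])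
    fix a assume "a \<in> perm_pairs A"
    then obtain s t where a: "a = (s, t)" "set s \<union> set t = A" "distinct s" "distinct t"
        "set s \<inter> set t = {}"
      by (auto simp: perm_pairs_def permutations_of_set_def)
    then have "set t = A - set s"
      by blast
    with a show "(case (case a of (s, t) \<Rightarrow> (set s, s, t)) of (X, s, t) \<Rightarrow> (s, t)) = a"
      and "(case a of (s, t) \<Rightarrow> (set s, s, t))
             \<in> Sigma (Pow A) (\<lambda>X. permutations_of_set X \<times> permutations_of_set (A - X))"
      and "(case (case a of (s, t) \<Rightarrow> (set s, s, t)) of (X, s, t) \<Rightarrow> f s t)
             = (case a of (s, t) \<Rightarrow> f s t)"
      by (auto simp: permutations_of_set_def)
  next
    fix b assume "b \<in> Sigma (Pow A) (\<lambda>X. permutations_of_set X \<times> permutations_of_set (A - X))"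
    then obtain X s t where b: "b = (X, s, t)" "X \<subseteq> A" "set s = X" "distinct s"
        "set t = A - X" "distinct t"
      by (auto simp: permutations_of_set_def)
    then show "(case (case b of (X, s, t) \<Rightarrow> (s, t)) of (s, t) \<Rightarrow> (set s, s, t)) = b"
      and "(case b of (X, s, t) \<Rightarrow> (s, t)) \<in> perm_pairs A"
      by (auto simp: perm_pairs_def permutations_of_set_def)
  qed
  also have "\<dots> = (\<Sum>X\<in>Pow A. \<Sum>(s, t)\<in>permutations_of_set X \<times> permutations_of_set (A - X). f s t)"
    using assms by (subst sum.Sigma) auto
  also have "\<dots> = (\<Sum>X\<in>Pow A. \<Sum>s\<in>permutations_of_set X. \<Sum>t\<in>permutations_of_set (A - X). f s t)"
    by (simp add: sum.cartesian_product)
  finally show ?thesis .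
qed

lemma sum_perm_pairs_eq_sum_take_drop:
  assumes "finite A"
  shows "(\<Sum>(s, t)\<in>perm_pairs A. f s t)
       = (\<Sum>p\<in>permutations_of_set A. \<Sum>j\<le>card A. f (take j p) (drop j p))"
proof -
  have "(\<Sum>(s, t)\<in>perm_pairs A. f s t)
      = (\<Sum>(p, j)\<in>permutations_of_set A \<times> {..card A}. f (take j p) (drop j p))"
    by (rule sum.reindex_bij_witness[where i = "\<lambda>(p, j). (take j p, drop j p)"
          and j = "\<lambda>(s, t). (s @ t, length s)"])
       (auto simp: perm_pairs_def length_finite_permutations_of_set[symmetric])
  also have "\<dots> = (\<Sum>p\<in>permutations_of_set A. \<Sum>j\<le>card A. f (take j p) (drop j p))"
    by (simp add: sum.cartesian_product)
  finally show ?thesis .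
qed

lemma sum_permutations_of_set_insert:
  assumes "m \<notin> A"
  shows "(\<Sum>p\<in>permutations_of_set (insert m A). g p) = (\<Sum>(s, t)\<in>perm_pairs A. g (s @ m # t))"
proof -
  have perm_pairs_iff: "(s, t) \<in> perm_pairs A \<longleftrightarrow> s @ m # t \<in> permutations_of_set (insert m A)"
    for s t
    using assms by (auto simp: perm_pairs_def permutations_of_set_def)
  have "inj_on (\<lambda>(s, t). s @ m # t) (perm_pairs A)"
  proof (rule inj_onI, clarify)
    fix s t s' t'
    assume "(s, t) \<in> perm_pairs A" "(s', t') \<in> perm_pairs A" "s @ m # t = s' @ m # t'"
    moreover have "m \<notin> set s" "m \<notin> set t"
      using calculation(1,2) assms by (auto simp: perm_pairs_def permutations_of_set_def)
    ultimately show "s = s' \<and> t = t'"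
      by (simp add: append_Cons_eq_iff)
  qed
  moreover have "(\<lambda>(s, t). s @ m # t) ` perm_pairs A = permutations_of_set (insert m A)"
  proof
    show "(\<lambda>(s, t). s @ m # t) ` perm_pairs A \<subseteq> permutations_of_set (insert m A)"
      using perm_pairs_iff by auto
  next
    show "permutations_of_set (insert m A) \<subseteq> (\<lambda>(s, t). s @ m # t) ` perm_pairs A"
    proof
      fix p assume p: "p \<in> permutations_of_set (insert m A)"
      then obtain s t where "p = s @ m # t"
        using split_list[of m p] by (auto dest: permutations_of_setD)
      with p show "p \<in> (\<lambda>(s, t). s @ m # t) ` perm_pairs A"
        using perm_pairs_iff by force
    qed
  qed
  ultimately show ?thesis
    using sum.reindex[of "\<lambda>(s, t). s @ m # t" "perm_pairs A" g] by (simp add: case_prod_beta')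
qed

section \<open>Peak polynomials\<close>

definition peak_sum :: "'a::comm_semiring_1 \<Rightarrow> nat set \<Rightarrow> 'a" where
  "peak_sum y A = (\<Sum>p\<in>permutations_of_set A. y ^ pk p)"

definition ballot_peak_sum :: "'a::comm_semiring_1 \<Rightarrow> nat set \<Rightarrow> 'a" where
  "ballot_peak_sum y A = (\<Sum>p\<in>permutations_of_set A. of_bool (ballot p) * y ^ pk p)"

definition peak_poly :: "'a::comm_semiring_1 \<Rightarrow> nat \<Rightarrow> 'a" where
  "peak_poly y n = peak_sum y {..<n}"

definition ballot_peak_poly :: "'a::comm_semiring_1 \<Rightarrow> nat \<Rightarrow> 'a" where
  "ballot_peak_poly y n = ballot_peak_sum y {..<n}"

lemma peak_sum_eq_peak_poly: "finite A \<Longrightarrow> peak_sum y A = peak_poly y (card A)"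
  unfolding peak_sum_def peak_poly_def
  by (rule sum_permutations_of_set_relabel) (simp_all add: pk_map_strict_mono)

lemma ballot_peak_sum_eq_ballot_peak_poly:
  "finite A \<Longrightarrow> ballot_peak_sum y A = ballot_peak_poly y (card A)"
  unfolding ballot_peak_sum_def ballot_peak_poly_def
  by (rule sum_permutations_of_set_relabel)
     (simp_all add: pk_map_strict_mono ballot_map_strict_mono)

lemma sum_ballot_perms_eq_ballot_peak_poly:
  "(\<Sum>p\<in>ballot_perms n. y ^ pk p) = ballot_peak_poly y n"
proof -
  have "ballot_perms n = permutations_of_set {1..n} \<inter> {p. ballot p}"
    unfolding ballot_perms_def by blast
  then have "(\<Sum>p\<in>ballot_perms n. y ^ pk p) = ballot_peak_sum y {1..n}"
    by (simp add: ballot_peak_sum_def)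
  then show ?thesis
    by (simp add: ballot_peak_sum_eq_ballot_peak_poly)
qed

lemma peak_poly_0 [simp]: "peak_poly y 0 = 1"
  by (simp add: peak_poly_def peak_sum_def)

lemma ballot_peak_poly_0 [simp]: "ballot_peak_poly y 0 = 1"
  by (simp add: ballot_peak_poly_def ballot_peak_sum_def ballot_def asc_def des_def)

lemma sum_Pow_card_Diff:
  fixes h :: "nat \<Rightarrow> nat \<Rightarrow> 'a::comm_semiring_1"
  assumes "finite A"
  shows "(\<Sum>X\<in>Pow A. h (card X) (card (A - X)))
       = (\<Sum>k\<le>card A. of_nat (card A choose k) * h k (card A - k))"
proof -
  have "(\<Sum>X\<in>Pow A. h (card X) (card (A - X))) = (\<Sum>X\<in>Pow A. h (card X) (card A - card X))"
    using assms by (intro sum.cong refl) (auto simp: card_Diff_subset finite_subset)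
  also have "\<dots> = (\<Sum>k\<le>card A. \<Sum>X\<in>{X\<in>Pow A. card X = k}. h (card X) (card A - card X))"
    using assms by (intro sum.group[symmetric]) (auto simp: card_mono)
  also have "\<dots> = (\<Sum>k\<le>card A. of_nat (card A choose k) * h k (card A - k))"
    using n_subsets[OF assms] by (intro sum.cong refl) simp
  finally show ?thesis .
qed

lemma peak_sum_insert_max:
  fixes y :: "'a::comm_semiring_1"
  assumes "finite A" and "\<forall>x\<in>A. x < m"
  shows "peak_sum y (insert m A)
       = (\<Sum>X\<in>Pow A. peak_sum y X * peak_sum y (A - X) * (if X = {} \<or> X = A then 1 else y))"
proof -
  have "peak_sum y (insert m A) = (\<Sum>(s, t)\<in>perm_pairs A. y ^ pk (s @ m # t))"
    unfolding peak_sum_def using assms(2) by (intro sum_permutations_of_set_insert) auto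
  also have "\<dots> = (\<Sum>(s, t)\<in>perm_pairs A. y ^ pk s * y ^ pk t * (if s = [] \<or> t = [] then 1 else y))"
  proof (rule sum.cong[OF refl], clarify)
    fix s t assume "(s, t) \<in> perm_pairs A"
    then have "\<forall>x\<in>set s \<union> set t. x < m"
      using assms(2) by (auto simp: perm_pairs_def permutations_of_set_def)
    then show "y ^ pk (s @ m # t) = y ^ pk s * y ^ pk t * (if s = [] \<or> t = [] then 1 else y)"
      by (simp add: pk_append_Cons_max power_add)
  qed
  also have "\<dots> = (\<Sum>X\<in>Pow A. \<Sum>s\<in>permutations_of_set X. \<Sum>t\<in>permutations_of_set (A - X).
                     y ^ pk s * y ^ pk t * (if X = {} \<or> X = A then 1 else y))"
    unfolding sum_perm_pairs_eq_sum_Pow[OF assms(1)]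
    by (intro sum.cong refl) (auto simp: permutations_of_set_def)
  also have "\<dots> = (\<Sum>X\<in>Pow A. peak_sum y X * peak_sum y (A - X) * (if X = {} \<or> X = A then 1 else y))"
    unfolding peak_sum_def sum_product by (simp only: sum_distrib_right)
  finally show ?thesis .
qed

lemma peak_poly_Suc:
  "peak_poly y (Suc n)
     = (\<Sum>k\<le>n. of_nat (n choose k) * (peak_poly y k * peak_poly y (n - k)
                                         * (if k = 0 \<or> n - k = 0 then 1 else y)))"
proof -
  have "peak_poly y (Suc n) = peak_sum y (insert n {..<n})"
    by (simp add: peak_poly_def lessThan_Suc)
  also have "\<dots> = (\<Sum>X\<in>Pow {..<n}. peak_sum y X * peak_sum y ({..<n} - X)
                                      * (if X = {} \<or> X = {..<n} then 1 else y))"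
    by (rule peak_sum_insert_max) auto
  also have "\<dots> = (\<Sum>X\<in>Pow {..<n}. peak_poly y (card X) * peak_poly y (card ({..<n} - X))
                    * (if card X = 0 \<or> card ({..<n} - X) = 0 then 1 else y))"
    by (intro sum.cong refl) (auto simp: peak_sum_eq_peak_poly finite_subset Diff_eq_empty_iff
        dest: subset_antisym)
  also have "\<dots> = (\<Sum>k\<le>n. of_nat (n choose k) * (peak_poly y k * peak_poly y (n - k)
                                         * (if k = 0 \<or> n - k = 0 then 1 else y)))"
    using sum_Pow_card_Diff[of "{..<n}"
        "\<lambda>a b. peak_poly y a * peak_poly y b * (if a = 0 \<or> b = 0 then 1 else y)"] by simp
  finally show ?thesis .
qed

lemma ballot_peak_sum_convolution:
  fixes y :: "'a::comm_semiring_1"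
  assumes "finite A" and "A \<noteq> {}"
  shows "(\<Sum>X\<in>Pow A. ballot_peak_sum y X * ballot_peak_sum y (A - X)) = 2 * peak_sum y A"
proof -
  let ?w = "\<lambda>s t. of_bool (ballot (rev s)) * y ^ pk s * (of_bool (ballot t) * y ^ pk t)"
  \<comment> \<open>Reversing the first block turns a pair of blocks into a reversed prefix and a suffix.\<close>
  have rev_sum:
    "ballot_peak_sum y X = (\<Sum>s\<in>permutations_of_set X. of_bool (ballot (rev s)) * y ^ pk s)" for X
  proof -
    have "ballot_peak_sum y X
        = sum (\<lambda>s. of_bool (ballot s) * y ^ pk s) (rev ` permutations_of_set X)"
      by (simp only: rev_permutations_of_set ballot_peak_sum_def)
    also have "\<dots> = sum ((\<lambda>s. of_bool (ballot s) * y ^ pk s) \<circ> rev) (permutations_of_set X)"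
      by (rule sum.reindex) simp
    finally show ?thesis
      by (simp add: comp_def)
  qed
  have "ballot_peak_sum y X * ballot_peak_sum y (A - X)
      = (\<Sum>s\<in>permutations_of_set X. \<Sum>t\<in>permutations_of_set (A - X). ?w s t)" for X
    unfolding rev_sum[of X] by (simp only: ballot_peak_sum_def sum_product)
  then have "(\<Sum>X\<in>Pow A. ballot_peak_sum y X * ballot_peak_sum y (A - X))
      = (\<Sum>X\<in>Pow A. \<Sum>s\<in>permutations_of_set X. \<Sum>t\<in>permutations_of_set (A - X). ?w s t)"
    by (simp only:)
  also have "\<dots> = (\<Sum>(s, t)\<in>perm_pairs A. ?w s t)"
    by (rule sum_perm_pairs_eq_sum_Pow[OF assms(1), symmetric])
  also have "\<dots> = (\<Sum>p\<in>permutations_of_set A. \<Sum>j\<le>card A. ?w (take j p) (drop j p))"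
    by (rule sum_perm_pairs_eq_sum_take_drop[OF assms(1)])
  also have "\<dots> = (\<Sum>p\<in>permutations_of_set A. 2 * y ^ pk p)"
  proof (rule sum.cong[OF refl])
    fix p assume p: "p \<in> permutations_of_set A"
    then have "length p = card A" "distinct p" "p \<noteq> []"
      using assms by (auto simp: length_finite_permutations_of_set dest: permutations_of_setD)
    then show "(\<Sum>j\<le>card A. ?w (take j p) (drop j p)) = 2 * y ^ pk p"
      using sum_ballot_cuts[of p y] by simp
  qed
  finally show ?thesis
    by (simp add: peak_sum_def sum_distrib_left)
qed

lemma ballot_peak_poly_convolution:
  fixes y :: "'a::comm_ring_1"
  shows "(\<Sum>k\<le>n. of_nat (n choose k) * (ballot_peak_poly y k * ballot_peak_poly y (n - k)))
       = 2 * peak_poly y n - of_bool (n = 0)"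
proof (cases "n = 0")
  case False
  have "(\<Sum>k\<le>n. of_nat (n choose k) * (ballot_peak_poly y k * ballot_peak_poly y (n - k)))
      = (\<Sum>X\<in>Pow {..<n}. ballot_peak_sum y X * ballot_peak_sum y ({..<n} - X))"
    using sum_Pow_card_Diff[of "{..<n}" "\<lambda>a b. ballot_peak_poly y a * ballot_peak_poly y b"]
    by (simp add: ballot_peak_sum_eq_ballot_peak_poly finite_subset)
  also have "\<dots> = 2 * peak_poly y n"
    using ballot_peak_sum_convolution[of "{..<n}" y] False
    by (simp add: peak_poly_def lessThan_empty_iff)
  finally show ?thesis
    using False by simp
qed simp

lemma norm_sum_pow_pk_le:
  fixes y :: "'a::real_normed_algebra_1"
  assumes "\<And>p. p \<in> S \<Longrightarrow> length p = n"
  shows "norm (\<Sum>p\<in>S. y ^ pk p) \<le> card S * max 1 (norm y) ^ n"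
proof -
  have "norm (y ^ pk p) \<le> max 1 (norm y) ^ n" if "p \<in> S" for p
  proof -
    have "norm (y ^ pk p) \<le> norm y ^ pk p"
      by (rule norm_power_ineq)
    also have "\<dots> \<le> max 1 (norm y) ^ pk p"
      by (rule power_mono) auto
    also have "\<dots> \<le> max 1 (norm y) ^ n"
      using pk_le_length[of p] assms[OF that] by (intro power_increasing) auto
    finally show ?thesis .
  qed
  then have "(\<Sum>p\<in>S. norm (y ^ pk p)) \<le> (\<Sum>p\<in>S. max 1 (norm y) ^ n)"
    by (rule sum_mono)
  then show ?thesis
    using norm_sum[of "\<lambda>p. y ^ pk p" S] by simp
qed

lemma norm_peak_poly_le:
  fixes y :: "'a::real_normed_field"
  shows "norm (peak_poly y n) \<le> fact n * max 1 (norm y) ^ n"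
  using norm_sum_pow_pk_le[of "permutations_of_set {..<n}" n y]
  by (simp add: peak_poly_def peak_sum_def length_finite_permutations_of_set)

lemma norm_ballot_peak_poly_le:
  fixes y :: "'a::real_normed_field"
  shows "norm (ballot_peak_poly y n) \<le> fact n * max 1 (norm y) ^ n"
proof -
  let ?S = "permutations_of_set {..<n} \<inter> {p. ballot p}"
  have "norm (ballot_peak_poly y n) = norm (\<Sum>p\<in>?S. y ^ pk p)"
    by (simp add: ballot_peak_poly_def ballot_peak_sum_def)
  also have "\<dots> \<le> card ?S * max 1 (norm y) ^ n"
    by (rule norm_sum_pow_pk_le) (auto simp: length_finite_permutations_of_set)
  also have "\<dots> \<le> fact n * max 1 (norm y) ^ n"
  proof (rule mult_right_mono)
    have "card ?S \<le> fact n"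
      using card_mono[of "permutations_of_set {..<n}" ?S] by simp
    then show "real (card ?S) \<le> fact n"
      by (metis of_nat_fact of_nat_le_iff)
  qed simp
  finally show ?thesis .
qed

section \<open>Exponential generating functions\<close>

definition egf :: "(nat \<Rightarrow> 'a::real_normed_field) \<Rightarrow> 'a \<Rightarrow> 'a" where
  "egf a x = (\<Sum>n. a n * x ^ n / fact n)"

lemma egf_summable_norm:
  fixes a :: "nat \<Rightarrow> 'a::real_normed_field"
  assumes bound: "\<And>n. norm (a n) \<le> fact n * M ^ n" and x: "norm x < 1 / M"
  shows "summable (\<lambda>n. norm (a n * x ^ n / fact n))"
proof (rule summable_comparison_test)
  have "0 \<le> M"
    using order.trans[OF norm_ge_zero bound[of 1]] by simp
  then have "0 < M"
    using x by (cases "M = 0") auto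
  have "norm (a n * x ^ n / fact n) \<le> (norm x * M) ^ n" for n
  proof -
    have "norm (a n * x ^ n / fact n) = norm (a n) / fact n * norm x ^ n"
      by (simp add: norm_mult norm_divide norm_power)
    also have "\<dots> \<le> fact n * M ^ n / fact n * norm x ^ n"
      by (intro mult_right_mono divide_right_mono bound) auto
    also have "\<dots> = (norm x * M) ^ n"
      by (simp add: power_mult_distrib)
    finally show ?thesis .
  qed
  then show "\<exists>N. \<forall>n\<ge>N. norm (norm (a n * x ^ n / fact n)) \<le> (norm x * M) ^ n"
    by simp
  show "summable (\<lambda>n. (norm x * M) ^ n)"
    using x \<open>0 < M\<close> by (intro summable_geometric) (simp add: field_simps)
qed

lemma egf_sums:
  fixes a :: "nat \<Rightarrow> 'a::{real_normed_field,banach}"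
  assumes "\<And>n. norm (a n) \<le> fact n * M ^ n" and "norm x < 1 / M"
  shows "(\<lambda>n. a n * x ^ n / fact n) sums egf a x"
  unfolding egf_def using summable_norm_cancel[OF egf_summable_norm[OF assms]]
  by (rule summable_sums)

lemma egf_0 [simp]: "egf a 0 = a 0"
  using powser_zero[of "\<lambda>n. a n / fact n"] by (simp add: egf_def)

lemma egf_binomial_convolution:
  fixes a b :: "nat \<Rightarrow> 'a::{real_normed_field,banach}"
  assumes "\<And>n. norm (a n) \<le> fact n * M ^ n" "\<And>n. norm (b n) \<le> fact n * M ^ n"
    and "norm x < 1 / M"
  shows "(\<lambda>n. (\<Sum>k\<le>n. of_nat (n choose k) * (a k * b (n - k))) * x ^ n / fact n)
           sums (egf a x * egf b x)"
proof -
  have "(\<Sum>k\<le>n. (a k * x ^ k / fact k) * (b (n - k) * x ^ (n - k) / fact (n - k)))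
      = (\<Sum>k\<le>n. of_nat (n choose k) * (a k * b (n - k))) * x ^ n / fact n" for n
  proof -
    have "(a k * x ^ k / fact k) * (b (n - k) * x ^ (n - k) / fact (n - k))
        = of_nat (n choose k) * (a k * b (n - k)) * x ^ n / fact n" if "k \<le> n" for k
    proof -
      have "x ^ k * x ^ (n - k) = x ^ n"
        using that by (simp add: power_add[symmetric])
      then show ?thesis
        using that by (simp add: binomial_fact field_simps)
    qed
    then show ?thesis
      by (simp add: sum_distrib_right sum_divide_distrib)
  qed
  moreover have "(\<lambda>n. \<Sum>k\<le>n. (a k * x ^ k / fact k) * (b (n - k) * x ^ (n - k) / fact (n - k)))
      sums (egf a x * egf b x)"
    unfolding egf_def using assms by (intro Cauchy_product_sums egf_summable_norm)
  ultimately show ?thesis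
    by simp
qed

lemma egf_has_field_derivative:
  fixes a :: "nat \<Rightarrow> 'a::{real_normed_field,banach}"
  assumes "\<And>n. norm (a n) \<le> fact n * M ^ n" and "norm x < 1 / M"
  shows "(egf a has_field_derivative egf (\<lambda>n. a (Suc n)) x) (at x)"
proof -
  define c where "c n = a n / fact n" for n
  have egf_c: "egf a = (\<lambda>z. \<Sum>n. c n * z ^ n)"
    by (rule ext) (simp add: egf_def c_def field_simps)
  have "diffs c n * x ^ n = a (Suc n) * x ^ n / fact n" for n
    by (simp add: diffs_def c_def field_simps del: of_nat_Suc)
  then have "(\<Sum>n. diffs c n * x ^ n) = egf (\<lambda>n. a (Suc n)) x"
    by (simp add: egf_def)
  moreover have "((\<lambda>z. \<Sum>n. c n * z ^ n) has_field_derivative (\<Sum>n. diffs c n * x ^ n)) (at x)"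
  proof (rule termdiffs_strong'[where K = "1 / M"])
    fix z :: 'a assume "norm z < 1 / M"
    then show "summable (\<lambda>n. c n * z ^ n)"
      using summable_norm_cancel[OF egf_summable_norm[OF assms(1)]] by (simp add: c_def field_simps)
  qed fact
  ultimately show ?thesis
    by (simp add: egf_c)
qed

lemma peak_poly_Suc_split:
  fixes y :: "'a::comm_ring_1"
  shows "peak_poly y (Suc n)
     = y * (\<Sum>k\<le>n. of_nat (n choose k) * (peak_poly y k * peak_poly y (n - k)))
       + (1 - y) * (2 * peak_poly y n - of_bool (n = 0))"
proof -
  let ?c = "\<lambda>k. of_nat (n choose k) * (peak_poly y k * peak_poly y (n - k))"
  have "peak_poly y (Suc n) = (\<Sum>k\<le>n. y * ?c k + (1 - y) * (?c k * of_bool (k = 0 \<or> k = n)))"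
    unfolding peak_poly_Suc
  proof (rule sum.cong[OF refl])
    fix k assume "k \<in> {..n}"
    then have "(k = 0 \<or> n - k = 0) \<longleftrightarrow> (k = 0 \<or> k = n)"
      by auto
    then show "of_nat (n choose k) * (peak_poly y k * peak_poly y (n - k)
                 * (if k = 0 \<or> n - k = 0 then 1 else y))
             = y * ?c k + (1 - y) * (?c k * of_bool (k = 0 \<or> k = n))"
      by (cases "k = 0 \<or> k = n") (simp_all add: algebra_simps)
  qed
  also have "\<dots> = y * (\<Sum>k\<le>n. ?c k) + (1 - y) * (\<Sum>k\<le>n. ?c k * of_bool (k = 0 \<or> k = n))"
    by (simp only: sum.distrib sum_distrib_left)
  also have "(\<Sum>k\<le>n. ?c k * of_bool (k = 0 \<or> k = n)) = 2 * peak_poly y n - of_bool (n = 0)"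
  proof (cases "n = 0")
    case False
    then have "{..n} \<inter> {k. k = 0 \<or> k = n} = {0, n}"
      by auto
    then have "(\<Sum>k\<le>n. ?c k * of_bool (k = 0 \<or> k = n)) = (\<Sum>k\<in>{0, n}. ?c k)"
      by (simp only: sum_mult_of_bool_eq finite_atMost)
    also have "\<dots> = 2 * peak_poly y n"
      using False by simp
    finally show ?thesis
      using False by simp
  qed simp
  finally show ?thesis .
qed

lemma egf_indicator_0_sums:
  "(\<lambda>n. of_bool (n = 0) * x ^ n / fact n) sums (1 :: 'a::real_normed_field)"
proof -
  have "(\<lambda>n. of_bool (n = 0) * x ^ n / fact n) = (\<lambda>n. if n = 0 then 1 else 0)"
    by auto
  then show ?thesis
    using sums_single[of 0 "\<lambda>_. 1 :: 'a"] by simp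
qed

lemma egf_ballot_peak_poly_square:
  fixes x y :: "'a::{real_normed_field,banach}"
  assumes "norm x < 1 / max 1 (norm y)"
  shows "egf (ballot_peak_poly y) x ^ 2 = 2 * egf (peak_poly y) x - 1"
proof -
  have "(\<lambda>n. (2 * peak_poly y n - of_bool (n = 0)) * x ^ n / fact n)
      sums (egf (ballot_peak_poly y) x * egf (ballot_peak_poly y) x)"
    using egf_binomial_convolution[OF norm_ballot_peak_poly_le norm_ballot_peak_poly_le assms]
    by (simp only: ballot_peak_poly_convolution)
  moreover have "(\<lambda>n. (2 * peak_poly y n - of_bool (n = 0)) * x ^ n / fact n)
      sums (2 * egf (peak_poly y) x - 1)"
  proof -
    have "(\<lambda>n. 2 * (peak_poly y n * x ^ n / fact n) - of_bool (n = 0) * x ^ n / fact n)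
        sums (2 * egf (peak_poly y) x - 1)"
      by (intro sums_diff sums_mult egf_sums[OF norm_peak_poly_le assms] egf_indicator_0_sums)
    then show ?thesis
      by (simp add: algebra_simps diff_divide_distrib)
  qed
  ultimately show ?thesis
    by (simp add: power2_eq_square sums_unique2)
qed

lemma egf_peak_poly_has_field_derivative:
  fixes x y :: "'a::{real_normed_field,banach}"
  assumes "norm x < 1 / max 1 (norm y)"
  defines "P \<equiv> egf (peak_poly y)"
  shows "(P has_field_derivative y * P x ^ 2 + (1 - y) * (2 * P x - 1)) (at x)"
proof -
  let ?conv = "\<lambda>n. \<Sum>k\<le>n. of_nat (n choose k) * (peak_poly y k * peak_poly y (n - k))"
  have "(\<lambda>n. y * (?conv n * x ^ n / fact n)
             + (1 - y) * (2 * (peak_poly y n * x ^ n / fact n) - of_bool (n = 0) * x ^ n / fact n))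
      sums (y * (P x * P x) + (1 - y) * (2 * P x - 1))"
    unfolding P_def
    by (intro sums_add sums_mult sums_diff egf_indicator_0_sums
        egf_binomial_convolution[OF norm_peak_poly_le norm_peak_poly_le assms(1)]
        egf_sums[OF norm_peak_poly_le assms(1)])
  then have "(\<lambda>n. peak_poly y (Suc n) * x ^ n / fact n)
      sums (y * P x ^ 2 + (1 - y) * (2 * P x - 1))"
    by (simp add: peak_poly_Suc_split algebra_simps diff_divide_distrib add_divide_distrib
        power2_eq_square)
  then have "egf (\<lambda>n. peak_poly y (Suc n)) x = y * P x ^ 2 + (1 - y) * (2 * P x - 1)"
    by (simp add: egf_def sums_iff)
  then show ?thesis
    unfolding P_def using egf_has_field_derivative[OF norm_peak_poly_le assms(1)] by simp
qed

section \<open>Vanishing of solutions of a linear differential equation\<close>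

lemma isCont_pos_near:
  fixes f :: "real \<Rightarrow> real"
  assumes "isCont f c" and "0 < f c"
  shows "\<exists>r>0. \<forall>x. \<bar>x - c\<bar> < r \<longrightarrow> 0 < f x"
proof -
  obtain r where "0 < r" "\<forall>x. x \<noteq> c \<and> \<bar>c - x\<bar> < r \<longrightarrow> 0 < f x"
    using LIM_fun_gt_zero[OF assms[unfolded isCont_def]] by blast
  with assms(2) show ?thesis
    by (metis abs_minus_commute)
qed

lemma linear_ode_contraction:
  fixes F H :: "real \<Rightarrow> real"
  assumes "0 < \<rho>" and "\<rho> * K < 1"
    and F': "\<And>x. \<bar>x\<bar> \<le> \<rho> \<Longrightarrow> (F has_real_derivative F x * H x) (at x)"
    and H: "\<And>x. \<bar>x\<bar> \<le> \<rho> \<Longrightarrow> \<bar>H x\<bar> \<le> K" and "F 0 = 0"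
    and "\<bar>x\<bar> \<le> \<rho>"
  shows "F x = 0"
proof -
  have "0 \<le> K"
    using H[of 0] \<open>0 < \<rho>\<close> by simp
  have "continuous_on {-\<rho>..\<rho>} F"
    by (intro continuous_at_imp_continuous_on ballI DERIV_isCont[OF F']) auto
  then have "continuous_on {-\<rho>..\<rho>} (\<lambda>x. \<bar>F x\<bar>)"
    by (intro continuous_intros)
  then have "\<exists>x\<in>{-\<rho>..\<rho>}. \<forall>z\<in>{-\<rho>..\<rho>}. \<bar>F z\<bar> \<le> \<bar>F x\<bar>"
    using \<open>0 < \<rho>\<close> by (intro continuous_attains_sup) auto
  then obtain x\<^sub>0 where x\<^sub>0: "x\<^sub>0 \<in> {-\<rho>..\<rho>}" and max: "\<And>x. x \<in> {-\<rho>..\<rho>} \<Longrightarrow> \<bar>F x\<bar> \<le> \<bar>F x\<^sub>0\<bar>"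
    by blast
  have F'_within: "(F has_field_derivative F z * H z) (at z within {-\<rho>..\<rho>})"
    if "z \<in> {-\<rho>..\<rho>}" for z
    using that by (auto intro!: has_field_derivative_at_within[OF F'])
  have F'_bound: "norm (F z * H z) \<le> \<bar>F x\<^sub>0\<bar> * K" if "z \<in> {-\<rho>..\<rho>}" for z
  proof -
    have "\<bar>F z\<bar> \<le> \<bar>F x\<^sub>0\<bar>" "\<bar>H z\<bar> \<le> K"
      using max[OF that] H[of z] that by auto
    then show ?thesis
      by (simp add: abs_mult mult_mono)
  qed
  \<comment> \<open>The maximum of \<open>\<bar>F\<bar>\<close> is bounded by \<open>\<rho> K\<close> times itself, so it vanishes.\<close>
  have "\<bar>F x\<^sub>0\<bar> = norm (F x\<^sub>0 - F 0)"
    using \<open>F 0 = 0\<close> by simp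
  also have "\<dots> \<le> \<bar>F x\<^sub>0\<bar> * K * norm (x\<^sub>0 - 0)"
    using \<open>0 < \<rho>\<close> x\<^sub>0
    by (intro field_differentiable_bound[OF convex_real_interval(5) F'_within F'_bound]) auto
  also have "\<dots> \<le> \<bar>F x\<^sub>0\<bar> * K * \<rho>"
    using x\<^sub>0 \<open>0 \<le> K\<close> by (intro mult_left_mono) auto
  finally have "\<bar>F x\<^sub>0\<bar> * (1 - \<rho> * K) \<le> 0"
    by (simp add: algebra_simps)
  then have "F x\<^sub>0 = 0"
    using \<open>\<rho> * K < 1\<close> by (simp add: mult_le_0_iff)
  moreover have "x \<in> {-\<rho>..\<rho>}"
    using \<open>\<bar>x\<bar> \<le> \<rho>\<close> by (simp add: abs_le_iff)
  ultimately show ?thesis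
    using max by fastforce
qed

lemma linear_ode_solution_vanishes_near_0:
  fixes F H :: "real \<Rightarrow> real"
  assumes "0 < r"
    and F': "\<And>x. \<bar>x\<bar> < r \<Longrightarrow> (F has_real_derivative F x * H x) (at x)"
    and "isCont H 0" and "F 0 = 0"
  shows "\<exists>r'>0. \<forall>x. \<bar>x\<bar> < r' \<longrightarrow> F x = 0"
proof -
  define K where "K = \<bar>H 0\<bar> + 1"
  have "isCont (\<lambda>x. 1 - \<bar>H x - H 0\<bar>) 0"
    using \<open>isCont H 0\<close> by (intro continuous_intros)
  then obtain d where "0 < d" and d: "\<And>x. \<bar>x\<bar> < d \<Longrightarrow> \<bar>H x - H 0\<bar> < 1"
    using isCont_pos_near[where c = 0] by force
  define \<rho> where "\<rho> = min (min r d / 2) (1 / (2 * K))"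
  have "0 < K"
    by (simp add: K_def)
  have "\<rho> * K \<le> 1 / (2 * K) * K"
    using \<open>0 < K\<close> by (intro mult_right_mono) (auto simp: \<rho>_def)
  also have "\<dots> < 1"
    using \<open>0 < K\<close> by simp
  finally have \<rho>: "0 < \<rho>" "\<rho> < r" "\<rho> < d" "\<rho> * K < 1"
    using \<open>0 < r\<close> \<open>0 < d\<close> \<open>0 < K\<close> by (auto simp: \<rho>_def)
  have "F x = 0" if "\<bar>x\<bar> \<le> \<rho>" for x
  proof (rule linear_ode_contraction[OF \<rho>(1,4) F' _ \<open>F 0 = 0\<close> that])
    fix z assume "\<bar>z\<bar> \<le> \<rho>"
    then show "\<bar>z\<bar> < r" and "\<bar>H z\<bar> \<le> K"
      using \<rho> d[of z] by (auto simp: K_def)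
  qed
  with \<rho>(1) show ?thesis
    by (intro exI[of _ \<rho>]) auto
qed

section \<open>The closed form\<close>

text \<open>The parameter \<open>s\<close> stands for \<open>sqrt (1 - y)\<close>.\<close>

definition peak_closed_form :: "real \<Rightarrow> real \<Rightarrow> real" where
  "peak_closed_form s x = s * cosh (x * s) / (s * cosh (x * s) - sinh (x * s))"

lemma peak_closed_form_0 [simp]: "0 < s \<Longrightarrow> peak_closed_form s 0 = 1"
  by (simp add: peak_closed_form_def)

lemma peak_closed_form_has_real_derivative:
  assumes "s * cosh (x * s) - sinh (x * s) \<noteq> 0"
  defines "Q \<equiv> peak_closed_form s"
  shows "(Q has_real_derivative (1 - s\<^sup>2) * Q x ^ 2 + s\<^sup>2 * (2 * Q x - 1)) (at x)"
proof -
  define c h where "c = cosh (x * s)" and "h = sinh (x * s)"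
  define g where "g = s * c - h"
  have "g \<noteq> 0" and Qx: "Q x = s * c / g"
    using assms by (simp_all add: Q_def peak_closed_form_def c_def h_def g_def)
  have "((\<lambda>x. s * cosh (x * s)) has_real_derivative s * (sinh (x * s) * s)) (at x)"
    and "((\<lambda>x. s * cosh (x * s) - sinh (x * s)) has_real_derivative
           s * (sinh (x * s) * s) - cosh (x * s) * s) (at x)"
    by (auto intro!: derivative_eq_intros)
  from DERIV_divide[OF this assms(1)]
  have "(Q has_real_derivative (s * (h * s) * g - s * c * (s * (h * s) - c * s)) / (g * g)) (at x)"
    unfolding Q_def peak_closed_form_def[abs_def] c_def h_def g_def .
  moreover have "s * (h * s) * g - s * c * (s * (h * s) - c * s) = s\<^sup>2 * (c\<^sup>2 - h\<^sup>2)"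
    by (simp add: g_def algebra_simps power2_eq_square)
  moreover have "(1 - s\<^sup>2) * (s * c / g) ^ 2 + s\<^sup>2 * (2 * (s * c / g) - 1)
      = ((1 - s\<^sup>2) * (s * c)\<^sup>2 + s\<^sup>2 * (2 * s * c * g - g\<^sup>2)) / g\<^sup>2"
    using \<open>g \<noteq> 0\<close> by (simp add: field_simps power2_eq_square)
  moreover have "(1 - s\<^sup>2) * (s * c)\<^sup>2 + s\<^sup>2 * (2 * s * c * g - g\<^sup>2) = s\<^sup>2 * (c\<^sup>2 - h\<^sup>2)"
    by (simp add: g_def algebra_simps power2_eq_square)
  moreover have "c\<^sup>2 - h\<^sup>2 = 1"
    unfolding c_def h_def by (rule hyperbolic_pythagoras)
  ultimately show ?thesis
    by (simp add: Qx power2_eq_square)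
qed

lemma peak_closed_form_denominator_pos_near_0:
  fixes s :: real
  assumes "0 < s"
  shows "\<exists>r>0. \<forall>x. \<bar>x\<bar> < r \<longrightarrow> 0 < s * cosh (x * s) - sinh (x * s)"
proof -
  have "((\<lambda>x. s * cosh (x * s) - sinh (x * s)) has_real_derivative
           s * (sinh (0 * s) * s) - cosh (0 * s) * s) (at 0)"
    by (auto intro!: derivative_eq_intros)
  then have "isCont (\<lambda>x. s * cosh (x * s) - sinh (x * s)) 0"
    by (rule DERIV_isCont)
  from isCont_pos_near[OF this] assms show ?thesis
    by simp
qed

lemma egf_pos_near_0:
  fixes a :: "nat \<Rightarrow> real"
  assumes "\<And>n. norm (a n) \<le> fact n * M ^ n" and "0 < M" and "0 < a 0"
  shows "\<exists>r>0. \<forall>x. \<bar>x\<bar> < r \<longrightarrow> 0 < egf a x"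
proof -
  have "isCont (egf a) 0"
    using egf_has_field_derivative[OF assms(1), of 0] assms(2) by (auto intro: DERIV_isCont)
  then show ?thesis
    using isCont_pos_near[where c = 0] assms(3) by simp
qed

lemma egf_peak_poly_eq_closed_form:
  fixes y :: real
  assumes "y < 1"
  shows "\<exists>r>0. \<forall>x. \<bar>x\<bar> < r \<longrightarrow> egf (peak_poly y) x = peak_closed_form (sqrt (1 - y)) x"
proof -
  define s where "s = sqrt (1 - y)"
  define P where "P = egf (peak_poly y)"
  define Q where "Q = peak_closed_form s"
  have "0 < s" and s2: "s\<^sup>2 = 1 - y"
    using assms by (simp_all add: s_def)
  obtain d where "0 < d" and denom: "\<And>x. \<bar>x\<bar> < d \<Longrightarrow> 0 < s * cosh (x * s) - sinh (x * s)"
    using peak_closed_form_denominator_pos_near_0[OF \<open>0 < s\<close>] by blast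
  define r where "r = min d (1 / max 1 \<bar>y\<bar>)"
  have "0 < r"
    using \<open>0 < d\<close> by (simp add: r_def)
  have P': "(P has_real_derivative y * P x ^ 2 + (1 - y) * (2 * P x - 1)) (at x)" if "\<bar>x\<bar> < r" for x
    unfolding P_def using egf_peak_poly_has_field_derivative[of x y] that by (simp add: r_def)
  have Q': "(Q has_real_derivative y * Q x ^ 2 + (1 - y) * (2 * Q x - 1)) (at x)" if "\<bar>x\<bar> < r" for x
    unfolding Q_def using peak_closed_form_has_real_derivative[of s x] denom[of x] that s2
    by (simp add: r_def)
  \<comment> \<open>\<open>P\<close> and \<open>Q\<close> solve the same Riccati equation, so \<open>P - Q\<close> satisfies a linear one.\<close>
  have "((\<lambda>x. P x - Q x) has_real_derivative (P x - Q x) * (y * (P x + Q x) + 2 * (1 - y))) (at x)"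
    if "\<bar>x\<bar> < r" for x
    using DERIV_diff[OF P'[OF that] Q'[OF that]] by (simp add: algebra_simps power2_eq_square)
  moreover have "isCont (\<lambda>x. y * (P x + Q x) + 2 * (1 - y)) 0"
    using DERIV_isCont[OF P'] DERIV_isCont[OF Q'] \<open>0 < r\<close> by (intro continuous_intros) auto
  moreover have "P 0 - Q 0 = 0"
    using \<open>0 < s\<close> by (simp add: P_def Q_def)
  ultimately obtain r' where "0 < r'" "\<forall>x. \<bar>x\<bar> < r' \<longrightarrow> P x - Q x = 0"
    using linear_ode_solution_vanishes_near_0[OF \<open>0 < r\<close>,
        where F = "\<lambda>x. P x - Q x" and H = "\<lambda>x. y * (P x + Q x) + 2 * (1 - y)"] by blast
  then show ?thesis
    unfolding P_def Q_def s_def by (intro exI[of _ r']) auto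
qed

lemma two_peak_closed_form_minus_1:
  assumes "s * cosh (x * s) - sinh (x * s) \<noteq> 0"
  shows "2 * peak_closed_form s x - 1
       = (s * cosh (x * s) + sinh (x * s)) / (s * cosh (x * s) - sinh (x * s))"
  using assms by (simp add: peak_closed_form_def field_simps)

lemma egf_ballot_peak_poly_eq_sqrt:
  fixes y :: real
  assumes "y < 1"
  defines "s \<equiv> sqrt (1 - y)"
  shows "\<exists>r>0. \<forall>x. \<bar>x\<bar> < r \<longrightarrow>
           egf (ballot_peak_poly y) x
             = sqrt ((s * cosh (x * s) + sinh (x * s)) / (s * cosh (x * s) - sinh (x * s)))"
proof -
  define B where "B = egf (ballot_peak_poly y)"
  have "0 < s"
    using assms by (simp add: s_def)
  obtain r\<^sub>1 where "0 < r\<^sub>1" and P_eq: "\<And>x. \<bar>x\<bar> < r\<^sub>1 \<Longrightarrow> egf (peak_poly y) x = peak_closed_form s x"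
    using egf_peak_poly_eq_closed_form[OF assms(1)] by (auto simp: s_def)
  obtain r\<^sub>2 where "0 < r\<^sub>2" and denom: "\<And>x. \<bar>x\<bar> < r\<^sub>2 \<Longrightarrow> 0 < s * cosh (x * s) - sinh (x * s)"
    using peak_closed_form_denominator_pos_near_0[OF \<open>0 < s\<close>] by blast
  have "0 < max 1 (norm y)"
    by simp
  from egf_pos_near_0[OF norm_ballot_peak_poly_le this]
  obtain r\<^sub>3 where "0 < r\<^sub>3" and B_pos: "\<And>x. \<bar>x\<bar> < r\<^sub>3 \<Longrightarrow> 0 < B x"
    by (auto simp: B_def)
  define r where "r = Min {r\<^sub>1, r\<^sub>2, r\<^sub>3, 1 / max 1 \<bar>y\<bar>}"
  have "B x = sqrt ((s * cosh (x * s) + sinh (x * s)) / (s * cosh (x * s) - sinh (x * s)))"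
    if "\<bar>x\<bar> < r" for x
  proof -
    have x: "\<bar>x\<bar> < r\<^sub>1" "\<bar>x\<bar> < r\<^sub>2" "\<bar>x\<bar> < r\<^sub>3" "\<bar>x\<bar> < 1 / max 1 \<bar>y\<bar>"
      using that by (simp_all add: r_def)
    have "B x ^ 2 = (s * cosh (x * s) + sinh (x * s)) / (s * cosh (x * s) - sinh (x * s))"
      using egf_ballot_peak_poly_square[of x y] x P_eq[OF x(1)] two_peak_closed_form_minus_1
        denom[OF x(2)] by (simp add: B_def)
    then show ?thesis
      using B_pos[OF x(3)] by (intro real_sqrt_unique[symmetric]) auto
  qed
  moreover have "0 < r"
    using \<open>0 < r\<^sub>1\<close> \<open>0 < r\<^sub>2\<close> \<open>0 < r\<^sub>3\<close> by (simp add: r_def)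
  ultimately show ?thesis
    unfolding B_def by blast
qed

theorem theorem3p8:
  fixes y :: real
  assumes "y < 1"
  shows "\<exists>r > 0. \<forall>x :: real. \<bar>x\<bar> < r \<longrightarrow>
    (\<lambda>n. (\<Sum>p\<in>ballot_perms n. y ^ pk p) * x ^ n / fact n) sums
      sqrt ((sqrt (1 - y) * cosh (x * sqrt (1 - y)) + sinh (x * sqrt (1 - y))) /
            (sqrt (1 - y) * cosh (x * sqrt (1 - y)) - sinh (x * sqrt (1 - y))))"
proof -
  obtain r where "0 < r" and closed_form: "\<And>x. \<bar>x\<bar> < r \<Longrightarrow> egf (ballot_peak_poly y) x =
      sqrt ((sqrt (1 - y) * cosh (x * sqrt (1 - y)) + sinh (x * sqrt (1 - y))) /
            (sqrt (1 - y) * cosh (x * sqrt (1 - y)) - sinh (x * sqrt (1 - y))))"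
    using egf_ballot_peak_poly_eq_sqrt[OF assms] by blast
  define r' where "r' = min r (1 / max 1 \<bar>y\<bar>)"
  have "(\<lambda>n. (\<Sum>p\<in>ballot_perms n. y ^ pk p) * x ^ n / fact n) sums egf (ballot_peak_poly y) x"
    if "\<bar>x\<bar> < r'" for x
    using egf_sums[OF norm_ballot_peak_poly_le, of x y] that
    by (simp add: r'_def sum_ballot_perms_eq_ballot_peak_poly)
  moreover have "0 < r'"
    using \<open>0 < r\<close> by (simp add: r'_def)
  ultimately show ?thesis
    using closed_form by (intro exI[of _ r']) (auto simp: r'_def)
qed

end
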